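(* Let $W\in L^1(\mathbb{R}^3)\cap L^p(\mathbb{R}^3)$, for some $p>3$, be a probability density, and for each $N$ let $y_1,\dots,y_N$ be independent identically distributed random points in $\mathbb{R}^3$ with density $W$, with joint law $P_N=\{W(x)dx\}^{\otimes N}$. Let $\nu^*(p)=\frac13\frac{p-3}{p-1}\in(0,1/3)$. Then the set of configurations $Y_N=\{y_1,\dots,y_N\}$ on which conditions (Y1) and (Y2) hold has $P_N$-probability tending to one as $N\to\infty$. More precisely: for every $0<\nu<\nu^*(p)$ and every $C>0$, $$\lim_{N\to\infty}P_N\Big(\min_{i\ne j}|y_i-y_j|\ge \frac{C}{N^{1-\nu}}\Big)=1,$$ and for every $0<\xi\le1$ there exists $C_\xi<\infty$ such that $$\lim_{N\to\infty}P_N\Big(\frac1{N^2}\sum_{i\neq j}\frac{1}{|y_i-y_j|^{3-\xi}}\le C_\xi\Big)=1.$$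
   Context: Condition (Y1): for any $0<\nu<\nu^*(p)$ there is $C$ with $\min_{i\neq j}|y_i-y_j|\ge C N^{-(1-\nu)}$. Condition (Y2): for any $0<\xi\le 1$ there is $C_\xi<\infty$, independent of $N$, with $N^{-2}\sum_{i\ne j}|y_i-y_j|^{-(3-\xi)}\le C_\xi$. *)

theory Defs
  imports "HOL-Probability.Probability"
begin

definition nu_star :: "real \<Rightarrow> real" where
  "nu_star p = (1/3) * ((p - 3) / (p - 1))"

definition iid_law :: "(real^3 \<Rightarrow> real) \<Rightarrow> nat \<Rightarrow> (nat \<Rightarrow> real^3) measure" where
  "iid_law W N = PiM {..<N} (\<lambda>_. density lborel (\<lambda>x. ennreal (W x)))"

end

theory Submission
  imports Defs
begin

text \<open>
  Everything reduces to the law of one pair of sample points. For a radial kernel \<open>k \<ge> 0\<close>,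
  \<open>W(x) W(y) \<le> W(x)\<^sup>2 + W(y)\<^sup>2\<close> and translation invariance give
  \<open>E k(|y\<^sub>1 - y\<^sub>2|) \<le> 2 \<parallel>W\<parallel>\<^sub>2\<^sup>2 \<integral> k(|z|) dz\<close>, and \<open>W \<in> L\<^sup>2\<close> since \<open>W \<in> L\<^sup>1 \<inter> L\<^sup>p\<close> with \<open>p \<ge> 2\<close>.
  For the indicator of \<open>[0, r)\<close> this says \<open>P(|y\<^sub>1 - y\<^sub>2| < r) = O(r\<^sup>3)\<close>; a union bound over the
  \<open>N\<^sup>2\<close> pairs then proves (Y1) for every \<open>\<nu> < 1/3\<close>, which covers \<open>\<nu> < \<nu>*(p)\<close>.
  For \<open>k(t) = 1 / t^(3 - \<xi>)\<close>, which is at most 1 for \<open>t \<ge> 1\<close>, the expectation is finite,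
  and (Y2) becomes a weak law for the normalised pair sum: after truncating the kernel at height
  \<open>\<surd>N\<close>, Markov's inequality controls the discarded tail, and Chebyshev's inequality the
  bounded part, whose variance is \<open>O(N\<^sup>3 \<surd>N)\<close> because only the \<open>O(N\<^sup>3)\<close> couples of index pairs sharing an index are correlated.
\<close>

definition offdiag :: "nat \<Rightarrow> (nat \<times> nat) set" where
  "offdiag N = (SIGMA i:{..<N}. {..<N} - {i})"

definition pair_sum :: "('a \<times> 'a \<Rightarrow> real) \<Rightarrow> nat \<Rightarrow> (nat \<Rightarrow> 'a) \<Rightarrow> real" where
  "pair_sum f N y = (\<Sum>p\<in>offdiag N. f (y (fst p), y (snd p)))"

lemma mem_offdiag: "p \<in> offdiag N \<longleftrightarrow> fst p < N \<and> snd p < N \<and> fst p \<noteq> snd p"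
  by (cases p) (auto simp: offdiag_def)

lemma finite_offdiag [simp]: "finite (offdiag N)"
  by (simp add: offdiag_def)

lemma card_offdiag_le: "real (card (offdiag N)) \<le> (real N)\<^sup>2"
proof -
  have "card (offdiag N) \<le> card ({..<N} \<times> {..<N})"
    by (rule card_mono) (auto simp: offdiag_def)
  then show ?thesis
    by (simp add: card_cartesian_product power2_eq_square flip: of_nat_mult)
qed

lemma card_offdiag_meeting_le:
  "card {q \<in> offdiag N. {fst p, snd p} \<inter> {fst q, snd q} \<noteq> {}} \<le> 4 * N"
proof -
  let ?E = "{fst p, snd p}"
  have "{q \<in> offdiag N. ?E \<inter> {fst q, snd q} \<noteq> {}} \<subseteq> ?E \<times> {..<N} \<union> {..<N} \<times> ?E"
    by (auto simp: offdiag_def)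
  then have "card {q \<in> offdiag N. ?E \<inter> {fst q, snd q} \<noteq> {}} \<le> card (?E \<times> {..<N} \<union> {..<N} \<times> ?E)"
    by (rule card_mono[rotated]) auto
  also have "\<dots> \<le> card (?E \<times> {..<N}) + card ({..<N} \<times> ?E)"
    by (rule card_Un_le)
  also have "\<dots> \<le> 2 * N + N * 2"
  proof -
    have "card ?E \<le> 2" by (cases "fst p = snd p") auto
    then show ?thesis unfolding card_cartesian_product
      by (intro add_mono mult_le_mono1 mult_le_mono2) auto
  qed
  finally show ?thesis by simp
qed

lemma pair_sum_eq_double_sum: "pair_sum f N y = (\<Sum>i<N. \<Sum>j\<in>{..<N} - {i}. f (y i, y j))"
  unfolding pair_sum_def offdiag_def by (subst sum.Sigma) (auto simp: case_prod_beta)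

lemma measurable_component_power:
  "i \<in> I \<Longrightarrow> (\<lambda>x. x i) \<in> measurable (PiM I (\<lambda>_. M)) M"
  using measurable_component_singleton[of i I "\<lambda>_. M"] by simp

lemma measurable_component_pair:
  "i \<in> I \<Longrightarrow> j \<in> I \<Longrightarrow> (\<lambda>x. (x i, x j)) \<in> measurable (PiM I (\<lambda>_. M)) (M \<Otimes>\<^sub>M M)"
  by (intro measurable_Pair measurable_component_power)

lemma measurable_pair_sum [measurable]:
  assumes "f \<in> borel_measurable (M \<Otimes>\<^sub>M M)"
  shows "pair_sum f N \<in> borel_measurable (PiM {..<N} (\<lambda>_. M))"
  unfolding pair_sum_def
  by (intro borel_measurable_sum measurable_compose[OF measurable_component_pair assms])
     (auto simp: mem_offdiag)

context
  fixes M :: "'a measure"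
  assumes prob_space_M: "prob_space M"
begin

lemma prob_space_PiM_power: "prob_space (PiM I (\<lambda>_. M))"
  by (rule prob_space_PiM) (rule prob_space_M)

lemma distr_component: "i \<in> I \<Longrightarrow> distr (PiM I (\<lambda>_. M)) M (\<lambda>x. x i) = M"
  using distr_PiM_component[of I "\<lambda>_. M" i] prob_space_M by simp

lemma indep_vars_components:
  assumes "I \<noteq> {}"
  shows "prob_space.indep_vars (PiM I (\<lambda>_. M)) (\<lambda>_. M) (\<lambda>i x. x i) I"
proof -
  interpret P: prob_space "PiM I (\<lambda>_. M)" by (rule prob_space_PiM_power)
  have "distr (PiM I (\<lambda>_. M)) (PiM I (\<lambda>_. M)) (\<lambda>x. \<lambda>i\<in>I. x i)
      = distr (PiM I (\<lambda>_. M)) (PiM I (\<lambda>_. M)) (\<lambda>x. x)"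
    by (rule distr_cong) (auto simp: space_PiM)
  also have "\<dots> = PiM I (\<lambda>_. M)"
    by simp
  also have "\<dots> = PiM I (\<lambda>i. distr (PiM I (\<lambda>_. M)) M (\<lambda>x. x i))"
    by (rule PiM_cong) (auto simp: distr_component)
  finally show ?thesis
    using assms by (subst P.indep_vars_iff_distr_eq_PiM') (auto intro: measurable_component_power)
qed

lemma indep_var_disjoint_pairs:
  assumes "i \<in> I" "j \<in> I" "k \<in> I" "l \<in> I" "{i, j} \<inter> {k, l} = {}"
    and F: "F \<in> borel_measurable (M \<Otimes>\<^sub>M M)" and G: "G \<in> borel_measurable (M \<Otimes>\<^sub>M M)"
  shows "prob_space.indep_var (PiM I (\<lambda>_. M)) borel (\<lambda>x. F (x i, x j)) borel (\<lambda>x. G (x k, x l))"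
proof -
  interpret P: prob_space "PiM I (\<lambda>_. M)" by (rule prob_space_PiM_power)
  have "P.indep_var (PiM {i, j} (\<lambda>_. M)) (\<lambda>x. restrict x {i, j}) (PiM {k, l} (\<lambda>_. M)) (\<lambda>x. restrict x {k, l})"
    by (rule P.indep_var_restrict[OF indep_vars_components]) (use assms in auto)
  moreover have "(\<lambda>x. F (x i, x j)) \<in> borel_measurable (PiM {i, j} (\<lambda>_. M))"
    by (rule measurable_compose[OF measurable_component_pair F]) auto
  moreover have "(\<lambda>x. G (x k, x l)) \<in> borel_measurable (PiM {k, l} (\<lambda>_. M))"
    by (rule measurable_compose[OF measurable_component_pair G]) auto
  ultimately have "P.indep_var borel ((\<lambda>x. F (x i, x j)) \<circ> (\<lambda>x. restrict x {i, j}))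
      borel ((\<lambda>x. G (x k, x l)) \<circ> (\<lambda>x. restrict x {k, l}))"
    by (rule P.indep_var_compose)
  then show ?thesis by (simp add: comp_def)
qed

lemma distr_component_pair:
  assumes "i \<in> I" "j \<in> I" "i \<noteq> j"
  shows "distr (PiM I (\<lambda>_. M)) (M \<Otimes>\<^sub>M M) (\<lambda>x. (x i, x j)) = M \<Otimes>\<^sub>M M"
proof -
  interpret P: prob_space "PiM I (\<lambda>_. M)" by (rule prob_space_PiM_power)
  have "P.indep_var (PiM {i} (\<lambda>_. M)) (\<lambda>x. restrict x {i}) (PiM {j} (\<lambda>_. M)) (\<lambda>x. restrict x {j})"
    by (rule P.indep_var_restrict[OF indep_vars_components]) (use assms in auto)
  then have "P.indep_var M ((\<lambda>f. f i) \<circ> (\<lambda>x. restrict x {i})) M ((\<lambda>f. f j) \<circ> (\<lambda>x. restrict x {j}))"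
    by (rule P.indep_var_compose) (auto intro: measurable_component_power)
  then have "P.indep_var M (\<lambda>x. x i) M (\<lambda>x. x j)"
    by (simp add: comp_def)
  then have "distr (PiM I (\<lambda>_. M)) M (\<lambda>x. x i) \<Otimes>\<^sub>M distr (PiM I (\<lambda>_. M)) M (\<lambda>x. x j)
      = distr (PiM I (\<lambda>_. M)) (M \<Otimes>\<^sub>M M) (\<lambda>x. (x i, x j))"
    using P.indep_var_distribution_eq by blast
  then show ?thesis
    using assms by (simp add: distr_component)
qed

lemma
  fixes f :: "'a \<times> 'a \<Rightarrow> real"
  assumes ij: "i \<in> I" "j \<in> I" "i \<noteq> j" and f: "integrable (M \<Otimes>\<^sub>M M) f"
  shows integrable_component_pair: "integrable (PiM I (\<lambda>_. M)) (\<lambda>x. f (x i, x j))"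
    and integral_component_pair: "(\<integral>x. f (x i, x j) \<partial>PiM I (\<lambda>_. M)) = (\<integral>z. f z \<partial>(M \<Otimes>\<^sub>M M))"
proof -
  note pair = measurable_component_pair[where M=M, OF ij(1,2)] and fm = borel_measurable_integrable[OF f]
  show "integrable (PiM I (\<lambda>_. M)) (\<lambda>x. f (x i, x j))"
    using integrable_distr_eq[OF pair fm] distr_component_pair[OF ij] f by simp
  show "(\<integral>x. f (x i, x j) \<partial>PiM I (\<lambda>_. M)) = (\<integral>z. f z \<partial>(M \<Otimes>\<^sub>M M))"
    using integral_distr[OF pair fm] distr_component_pair[OF ij] by simp
qed

lemma measure_component_pair:
  assumes ij: "i \<in> I" "j \<in> I" "i \<noteq> j" and A: "A \<in> sets (M \<Otimes>\<^sub>M M)"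
  shows "measure (PiM I (\<lambda>_. M)) {x \<in> space (PiM I (\<lambda>_. M)). (x i, x j) \<in> A} = measure (M \<Otimes>\<^sub>M M) A"
proof -
  have "measure (distr (PiM I (\<lambda>_. M)) (M \<Otimes>\<^sub>M M) (\<lambda>x. (x i, x j))) A
      = measure (PiM I (\<lambda>_. M)) ((\<lambda>x. (x i, x j)) -` A \<inter> space (PiM I (\<lambda>_. M)))"
    by (rule measure_distr[OF measurable_component_pair[OF ij(1,2)]]) (use A in simp)
  moreover have "(\<lambda>x. (x i, x j)) -` A \<inter> space (PiM I (\<lambda>_. M)) = {x \<in> space (PiM I (\<lambda>_. M)). (x i, x j) \<in> A}"
    by auto
  ultimately show ?thesis
    using distr_component_pair[OF ij] by simp
qed

lemma
  assumes f: "integrable (M \<Otimes>\<^sub>M M) f"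
  shows integrable_pair_sum: "integrable (PiM {..<N} (\<lambda>_. M)) (pair_sum f N)"
    and integral_pair_sum:
      "(\<integral>y. pair_sum f N y \<partial>PiM {..<N} (\<lambda>_. M)) = real (card (offdiag N)) * (\<integral>z. f z \<partial>(M \<Otimes>\<^sub>M M))"
proof -
  have p: "fst p \<in> {..<N}" "snd p \<in> {..<N}" "fst p \<noteq> snd p" if "p \<in> offdiag N" for p
    using that by (auto simp: mem_offdiag)
  show "integrable (PiM {..<N} (\<lambda>_. M)) (pair_sum f N)"
    unfolding pair_sum_def[abs_def]
    by (intro Bochner_Integration.integrable_sum integrable_component_pair[OF p f])
  have "(\<integral>y. pair_sum f N y \<partial>PiM {..<N} (\<lambda>_. M))
      = (\<Sum>p\<in>offdiag N. \<integral>y. f (y (fst p), y (snd p)) \<partial>PiM {..<N} (\<lambda>_. M))"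
    unfolding pair_sum_def
    by (intro Bochner_Integration.integral_sum integrable_component_pair[OF p f])
  also have "\<dots> = (\<Sum>p\<in>offdiag N. \<integral>z. f z \<partial>(M \<Otimes>\<^sub>M M))"
    by (intro sum.cong refl integral_component_pair[OF p f])
  finally show "(\<integral>y. pair_sum f N y \<partial>PiM {..<N} (\<lambda>_. M)) = real (card (offdiag N)) * (\<integral>z. f z \<partial>(M \<Otimes>\<^sub>M M))"
    by simp
qed

section \<open>A weak law for U-statistics\<close>

lemma prob_pair_sum_ge_le:
  assumes b: "integrable (M \<Otimes>\<^sub>M M) b" and b_nonneg: "\<And>z. 0 \<le> b z" and N: "N \<ge> 1"
  shows "measure (PiM {..<N} (\<lambda>_. M)) {y \<in> space (PiM {..<N} (\<lambda>_. M)). (real N)\<^sup>2 \<le> pair_sum b N y}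
    \<le> (\<integral>z. b z \<partial>(M \<Otimes>\<^sub>M M))"
proof -
  let ?\<beta> = "\<integral>z. b z \<partial>(M \<Otimes>\<^sub>M M)"
  have "measure (PiM {..<N} (\<lambda>_. M)) {y \<in> space (PiM {..<N} (\<lambda>_. M)). (real N)\<^sup>2 \<le> pair_sum b N y}
      \<le> (\<integral>y. pair_sum b N y \<partial>PiM {..<N} (\<lambda>_. M)) / (real N)\<^sup>2"
    by (rule integral_Markov_inequality_measure[OF integrable_pair_sum[OF b], where A="space (PiM {..<N} (\<lambda>_. M))"])
       (use N in \<open>auto simp: pair_sum_def b_nonneg intro!: sum_nonneg\<close>)
  also have "\<dots> = real (card (offdiag N)) * ?\<beta> / (real N)\<^sup>2"
    by (simp add: integral_pair_sum[OF b])
  also have "\<dots> \<le> ?\<beta>"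
  proof -
    have "0 \<le> ?\<beta>" by (simp add: b_nonneg)
    then have "real (card (offdiag N)) * ?\<beta> \<le> (real N)\<^sup>2 * ?\<beta>"
      by (rule mult_right_mono[OF card_offdiag_le])
    then show ?thesis using N by (simp add: divide_le_eq mult.commute)
  qed
  finally show ?thesis .
qed

lemma integrable_pair_product:
  fixes f :: "'a \<times> 'a \<Rightarrow> real"
  assumes [measurable]: "f \<in> borel_measurable (M \<Otimes>\<^sub>M M)" and f_bnd: "\<And>z. \<bar>f z\<bar> \<le> B"
    and p: "p \<in> offdiag N" and q: "q \<in> offdiag N"
  shows "integrable (PiM {..<N} (\<lambda>_. M)) (\<lambda>y. f (y (fst p), y (snd p)) * f (y (fst q), y (snd q)))"
proof -
  interpret P: prob_space "PiM {..<N} (\<lambda>_. M)" by (rule prob_space_PiM_power)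
  have "fst r \<in> {..<N}" "snd r \<in> {..<N}" if "r \<in> offdiag N" for r
    using that by (auto simp: mem_offdiag)
  then show ?thesis
    using p q f_bnd order_trans[OF abs_ge_zero f_bnd]
    by (intro P.integrable_const_bound[where B="B * B"] AE_I2)
       (auto simp: abs_mult intro!: mult_mono measurable_compose[OF measurable_component_pair])
qed

lemma integral_centered_pair_products_le:
  fixes g :: "'a \<times> 'a \<Rightarrow> real"
  assumes g [measurable]: "g \<in> borel_measurable (M \<Otimes>\<^sub>M M)"
    and g_bnd: "\<And>z. 0 \<le> g z" "\<And>z. g z \<le> T"
    and p: "p \<in> offdiag N" and q: "q \<in> offdiag N"
  defines "\<mu> \<equiv> \<integral>z. g z \<partial>(M \<Otimes>\<^sub>M M)"
  shows "(\<integral>y. (g (y (fst p), y (snd p)) - \<mu>) * (g (y (fst q), y (snd q)) - \<mu>) \<partial>PiM {..<N} (\<lambda>_. M))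
    \<le> (if {fst p, snd p} \<inter> {fst q, snd q} = {} then 0 else 2 * T * \<mu>)"
proof -
  interpret MM: prob_space "M \<Otimes>\<^sub>M M" by (rule prob_space_pair[OF prob_space_M prob_space_M])
  interpret P: prob_space "PiM {..<N} (\<lambda>_. M)" by (rule prob_space_PiM_power)
  let ?P = "PiM {..<N} (\<lambda>_. M)"
  define d where "d r y = g (y (fst r), y (snd r)) - \<mu>" for r :: "nat \<times> nat" and y :: "nat \<Rightarrow> 'a"
  have r: "fst r \<in> {..<N}" "snd r \<in> {..<N}" "fst r \<noteq> snd r" if "r \<in> offdiag N" for r
    using that by (auto simp: mem_offdiag)
  have g_int: "integrable (M \<Otimes>\<^sub>M M) g"
    by (rule MM.integrable_const_bound[where B=T]) (use g_bnd in auto)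
  have \<mu>_bnd: "0 \<le> \<mu>" "\<mu> \<le> T"
    unfolding \<mu>_def using g_int g_bnd by (auto intro!: MM.integral_le_const)
  have g_centered: "\<bar>g z - \<mu>\<bar> \<le> T" for z
    using g_bnd[of z] \<mu>_bnd by (auto simp: abs_le_iff)
  have d_bnd: "\<bar>d r y\<bar> \<le> T" for r y
    unfolding d_def by (rule g_centered)
  have dd_int: "integrable ?P (\<lambda>y. d p y * d q y)"
    unfolding d_def by (rule integrable_pair_product[OF _ g_centered p q]) measurable
  show ?thesis
  proof (cases "{fst p, snd p} \<inter> {fst q, snd q} = {}")
    case True
    have centered: "integrable ?P (d r)" "(\<integral>y. d r y \<partial>?P) = 0" if "r \<in> offdiag N" for r
      using integrable_component_pair[OF r[OF that], of "\<lambda>z. g z - \<mu>"]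
        integral_component_pair[OF r[OF that], of "\<lambda>z. g z - \<mu>"] g_int
      by (simp_all add: d_def[abs_def] \<mu>_def MM.prob_space)
    have "P.indep_var borel (d p) borel (d q)"
      using indep_var_disjoint_pairs[of "fst p" "{..<N}" "snd p" "fst q" "snd q"
          "\<lambda>z. g z - \<mu>" "\<lambda>z. g z - \<mu>"] r[OF p] r[OF q] True
      by (simp add: d_def[abs_def])
    then have "(\<integral>y. d p y * d q y \<partial>?P) = (\<integral>y. d p y \<partial>?P) * (\<integral>y. d q y \<partial>?P)"
      using P.indep_var_lebesgue_integral centered(1)[OF p] centered(1)[OF q] by blast
    then show ?thesis
      using True centered(2)[OF p] by (simp add: d_def)
  next
    case False
    have bnd_int: "integrable (M \<Otimes>\<^sub>M M) (\<lambda>z. T * (g z + \<mu>))"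
      using g_int by simp
    have "(\<integral>y. d p y * d q y \<partial>?P) \<le> (\<integral>y. T * (g (y (fst q), y (snd q)) + \<mu>) \<partial>?P)"
    proof (rule integral_mono)
      show "integrable ?P (\<lambda>y. d p y * d q y)" by (rule dd_int)
      show "integrable ?P (\<lambda>y. T * (g (y (fst q), y (snd q)) + \<mu>))"
        by (rule integrable_component_pair[OF r[OF q] bnd_int])
      fix y
      have "d p y * d q y \<le> \<bar>d p y\<bar> * \<bar>d q y\<bar>" by (simp flip: abs_mult)
      also have "\<dots> \<le> T * (g (y (fst q), y (snd q)) + \<mu>)"
        using d_bnd[of p y] g_bnd[of "(y (fst q), y (snd q))"] \<mu>_bnd unfolding d_def
        by (intro mult_mono) auto
      finally show "d p y * d q y \<le> T * (g (y (fst q), y (snd q)) + \<mu>)" .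
    qed
    also have "\<dots> = 2 * T * \<mu>"
      using integral_component_pair[OF r[OF q] bnd_int] g_int
      by (simp add: \<mu>_def MM.prob_space)
    finally show ?thesis
      using False by (auto simp: d_def)
  qed
qed

lemma second_moment_centered_pair_sum_le:
  fixes g :: "'a \<times> 'a \<Rightarrow> real"
  assumes g [measurable]: "g \<in> borel_measurable (M \<Otimes>\<^sub>M M)"
    and g_bnd: "\<And>z. 0 \<le> g z" "\<And>z. g z \<le> T"
  defines "\<mu> \<equiv> \<integral>z. g z \<partial>(M \<Otimes>\<^sub>M M)"
  shows "(\<integral>y. (pair_sum (\<lambda>z. g z - \<mu>) N y)\<^sup>2 \<partial>PiM {..<N} (\<lambda>_. M)) \<le> 8 * T * \<mu> * real N ^ 3"
proof -
  interpret MM: prob_space "M \<Otimes>\<^sub>M M" by (rule prob_space_pair[OF prob_space_M prob_space_M])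
  let ?P = "PiM {..<N} (\<lambda>_. M)"
  define d where "d r y = g (y (fst r), y (snd r)) - \<mu>" for r :: "nat \<times> nat" and y :: "nat \<Rightarrow> 'a"
  have r: "fst r \<in> {..<N}" "snd r \<in> {..<N}" if "r \<in> offdiag N" for r
    using that by (auto simp: mem_offdiag)
  have T: "0 \<le> T" using g_bnd order_trans by blast
  have g_int: "integrable (M \<Otimes>\<^sub>M M) g"
    by (rule MM.integrable_const_bound[where B=T]) (use g_bnd in auto)
  have \<mu>_bnd: "0 \<le> \<mu>" "\<mu> \<le> T"
    unfolding \<mu>_def using g_int g_bnd by (auto intro!: MM.integral_le_const)
  have g_centered: "\<bar>g z - \<mu>\<bar> \<le> T" for z
    using g_bnd[of z] \<mu>_bnd by (auto simp: abs_le_iff)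
  have dd_int: "integrable ?P (\<lambda>y. d p y * d q y)" if "p \<in> offdiag N" "q \<in> offdiag N" for p q
    unfolding d_def by (rule integrable_pair_product[OF _ g_centered that]) measurable
  have row: "(\<Sum>q\<in>offdiag N. \<integral>y. d p y * d q y \<partial>?P) \<le> real (4 * N) * (2 * T * \<mu>)"
    if p: "p \<in> offdiag N" for p
  proof -
    let ?meet = "{q \<in> offdiag N. {fst p, snd p} \<inter> {fst q, snd q} \<noteq> {}}"
    have "(\<Sum>q\<in>offdiag N. \<integral>y. d p y * d q y \<partial>?P)
        \<le> (\<Sum>q\<in>offdiag N. if {fst p, snd p} \<inter> {fst q, snd q} = {} then 0 else 2 * T * \<mu>)"
      by (rule sum_mono) (unfold d_def \<mu>_def, erule integral_centered_pair_products_le[OF g g_bnd p])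
    also have "\<dots> = (\<Sum>q\<in>offdiag N. if {fst p, snd p} \<inter> {fst q, snd q} \<noteq> {} then 2 * T * \<mu> else 0)"
      by (intro sum.cong) auto
    also have "\<dots> = real (card ?meet) * (2 * T * \<mu>)"
      by (simp add: sum.inter_filter[symmetric])
    also have "\<dots> \<le> real (4 * N) * (2 * T * \<mu>)"
      using card_offdiag_meeting_le[of N p] T \<mu>_bnd by (intro mult_right_mono) auto
    finally show ?thesis .
  qed
  have "(\<integral>y. (pair_sum (\<lambda>z. g z - \<mu>) N y)\<^sup>2 \<partial>?P) = (\<Sum>p\<in>offdiag N. \<Sum>q\<in>offdiag N. \<integral>y. d p y * d q y \<partial>?P)"
    unfolding pair_sum_def power2_eq_square sum_product d_def[symmetric] using dd_int
    by (subst Bochner_Integration.integral_sum)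
       (auto intro!: Bochner_Integration.integrable_sum sum.cong Bochner_Integration.integral_sum)
  also have "\<dots> \<le> real (card (offdiag N)) * (real (4 * N) * (2 * T * \<mu>))"
    using sum_mono[OF row] by simp
  also have "\<dots> \<le> (real N)\<^sup>2 * (real (4 * N) * (2 * T * \<mu>))"
    using T \<mu>_bnd by (intro mult_right_mono card_offdiag_le) auto
  also have "\<dots> = 8 * T * \<mu> * real N ^ 3"
    by (simp add: power2_eq_square power3_eq_cube)
  finally show ?thesis .
qed


lemma prob_centered_pair_sum_ge_le:
  fixes g :: "'a \<times> 'a \<Rightarrow> real"
  assumes g [measurable]: "g \<in> borel_measurable (M \<Otimes>\<^sub>M M)"
    and g_bnd: "\<And>z. 0 \<le> g z" "\<And>z. g z \<le> T" and N: "N \<ge> 1"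
  defines "\<mu> \<equiv> \<integral>z. g z \<partial>(M \<Otimes>\<^sub>M M)"
  shows "measure (PiM {..<N} (\<lambda>_. M))
      {y \<in> space (PiM {..<N} (\<lambda>_. M)). (real N)\<^sup>2 \<le> \<bar>pair_sum (\<lambda>z. g z - \<mu>) N y\<bar>}
    \<le> 8 * T * \<mu> / real N"
proof -
  interpret MM: prob_space "M \<Otimes>\<^sub>M M" by (rule prob_space_pair[OF prob_space_M prob_space_M])
  interpret P: prob_space "PiM {..<N} (\<lambda>_. M)" by (rule prob_space_PiM_power)
  let ?P = "PiM {..<N} (\<lambda>_. M)" and ?D = "pair_sum (\<lambda>z. g z - \<mu>) N"
  have \<mu>_bnd: "0 \<le> \<mu>" "\<mu> \<le> T"
    unfolding \<mu>_def using g_bnd by (auto intro!: MM.integral_le_const MM.integrable_const_bound[where B=T])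
  have g_centered: "\<bar>g z - \<mu>\<bar> \<le> T" for z
    using g_bnd[of z] \<mu>_bnd by (auto simp: abs_le_iff)
  have "\<bar>?D y\<bar> \<le> real (card (offdiag N)) * T" for y
    unfolding pair_sum_def by (intro order_trans[OF sum_abs] sum_bounded_above g_centered)
  then have D2_int: "integrable ?P (\<lambda>y. (?D y)\<^sup>2)"
    by (intro P.integrable_const_bound[where B="(real (card (offdiag N)) * T)\<^sup>2"] AE_I2)
       (auto simp flip: abs_le_square_iff intro: order_trans abs_ge_self)
  have "{y \<in> space ?P. (real N)\<^sup>2 \<le> \<bar>?D y\<bar>} = {y \<in> space ?P. ((real N)\<^sup>2)\<^sup>2 \<le> (?D y)\<^sup>2}"
  proof -
    have "a \<le> \<bar>x\<bar> \<longleftrightarrow> a\<^sup>2 \<le> x\<^sup>2" if "0 \<le> a" for a x :: real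
      using abs_le_square_iff[of a x] that by simp
    then show ?thesis by auto
  qed
  then have "measure ?P {y \<in> space ?P. (real N)\<^sup>2 \<le> \<bar>?D y\<bar>} \<le> (\<integral>y. (?D y)\<^sup>2 \<partial>?P) / ((real N)\<^sup>2)\<^sup>2"
    using N by (auto intro!: integral_Markov_inequality_measure[OF D2_int, where A="space ?P"])
  also have "\<dots> \<le> 8 * T * \<mu> * real N ^ 3 / ((real N)\<^sup>2)\<^sup>2"
    unfolding \<mu>_def by (intro divide_right_mono second_moment_centered_pair_sum_le[OF g g_bnd]) simp
  also have "\<dots> = 8 * T * \<mu> / real N"
    using N by (simp add: field_simps power2_eq_square power3_eq_cube)
  finally show ?thesis .
qed

lemma prob_pair_sum_le_ge:
  fixes h :: "'a \<times> 'a \<Rightarrow> real"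
  assumes h [measurable]: "h \<in> borel_measurable (M \<Otimes>\<^sub>M M)" and h_nonneg: "\<And>z. 0 \<le> h z"
    and h_int: "integrable (M \<Otimes>\<^sub>M M) h" and N: "N \<ge> 1" and T: "T \<ge> 0"
  shows "1 - ((\<integral>z. h z - min (h z) T \<partial>(M \<Otimes>\<^sub>M M)) + 8 * T * (\<integral>z. h z \<partial>(M \<Otimes>\<^sub>M M)) / real N)
    \<le> measure (PiM {..<N} (\<lambda>_. M)) {y \<in> space (PiM {..<N} (\<lambda>_. M)).
         1 / (real N)\<^sup>2 * pair_sum h N y \<le> (\<integral>z. h z \<partial>(M \<Otimes>\<^sub>M M)) + 2}"
proof -
  interpret P: prob_space "PiM {..<N} (\<lambda>_. M)" by (rule prob_space_PiM_power)
  let ?P = "PiM {..<N} (\<lambda>_. M)"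
  define g where "g z = min (h z) T" for z
  define b where "b z = h z - g z" for z
  define \<mu> where "\<mu> = (\<integral>z. h z \<partial>(M \<Otimes>\<^sub>M M))"
  define \<mu>T where "\<mu>T = (\<integral>z. g z \<partial>(M \<Otimes>\<^sub>M M))"
  have g_bnd: "0 \<le> g z" "g z \<le> T" "g z \<le> h z" for z
    using h_nonneg[of z] T by (auto simp: g_def)
  have [measurable]: "g \<in> borel_measurable (M \<Otimes>\<^sub>M M)" "b \<in> borel_measurable (M \<Otimes>\<^sub>M M)"
    unfolding g_def[abs_def] b_def[abs_def] by measurable
  have b_nonneg: "0 \<le> b z" for z
    using g_bnd by (simp add: b_def)
  have g_int: "integrable (M \<Otimes>\<^sub>M M) g"
    by (rule Bochner_Integration.integrable_bound[OF h_int])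
       (use g_bnd h_nonneg in \<open>auto intro!: AE_I2 simp: abs_of_nonneg\<close>)
  then have b_int: "integrable (M \<Otimes>\<^sub>M M) b"
    unfolding b_def[abs_def] using h_int by simp
  have \<mu>T_bnd: "0 \<le> \<mu>T" "\<mu>T \<le> \<mu>"
    unfolding \<mu>T_def \<mu>_def using g_int h_int g_bnd by (auto intro!: integral_mono)
  define A1 where "A1 = {y \<in> space ?P. (real N)\<^sup>2 \<le> pair_sum b N y}"
  define A2 where "A2 = {y \<in> space ?P. (real N)\<^sup>2 \<le> \<bar>pair_sum (\<lambda>z. g z - \<mu>T) N y\<bar>}"
  define E where "E = {y \<in> space ?P. 1 / (real N)\<^sup>2 * pair_sum h N y \<le> \<mu> + 2}"
  have "space ?P - E \<subseteq> A1 \<union> A2"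
  proof
    fix y assume y: "y \<in> space ?P - E"
    have "pair_sum h N y = pair_sum b N y + pair_sum (\<lambda>z. g z - \<mu>T) N y + real (card (offdiag N)) * \<mu>T"
      by (simp add: pair_sum_def b_def sum.distrib sum_subtractf)
    moreover have "real (card (offdiag N)) * \<mu>T \<le> (real N)\<^sup>2 * \<mu>"
      using \<mu>T_bnd by (intro mult_mono card_offdiag_le) auto
    moreover have "(\<mu> + 2) * (real N)\<^sup>2 < pair_sum h N y"
      using y N by (auto simp: E_def field_simps)
    ultimately show "y \<in> A1 \<union> A2"
      using y by (auto simp: A1_def A2_def algebra_simps)
  qed
  then have "measure ?P (space ?P - E) \<le> measure ?P (A1 \<union> A2)"
    by (intro P.finite_measure_mono) (auto simp: A1_def A2_def)
  also have "\<dots> \<le> measure ?P A1 + measure ?P A2"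
    by (intro measure_Un_le) (auto simp: A1_def A2_def)
  also have "\<dots> \<le> (\<integral>z. b z \<partial>(M \<Otimes>\<^sub>M M)) + 8 * T * \<mu>T / real N"
    unfolding A1_def A2_def \<mu>T_def
    by (intro add_mono prob_pair_sum_ge_le[OF b_int b_nonneg N]
        prob_centered_pair_sum_ge_le[OF _ g_bnd(1,2) N]) simp
  also have "\<dots> \<le> (\<integral>z. b z \<partial>(M \<Otimes>\<^sub>M M)) + 8 * T * \<mu> / real N"
    using \<mu>T_bnd T by (intro add_left_mono divide_right_mono mult_left_mono) auto
  finally show ?thesis
    using P.prob_compl[of E] by (simp add: E_def b_def g_def \<mu>_def)
qed

lemma tendsto_prob_pair_sum_le:
  fixes h :: "'a \<times> 'a \<Rightarrow> real"
  assumes h [measurable]: "h \<in> borel_measurable (M \<Otimes>\<^sub>M M)" and h_nonneg: "\<And>z. 0 \<le> h z"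
    and h_int: "integrable (M \<Otimes>\<^sub>M M) h"
  shows "(\<lambda>N. measure (PiM {..<N} (\<lambda>_. M)) {y \<in> space (PiM {..<N} (\<lambda>_. M)).
           1 / (real N)\<^sup>2 * pair_sum h N y \<le> (\<integral>z. h z \<partial>(M \<Otimes>\<^sub>M M)) + 2}) \<longlonglongrightarrow> 1"
proof -
  define \<mu> where "\<mu> = (\<integral>z. h z \<partial>(M \<Otimes>\<^sub>M M))"
  define \<beta> where "\<beta> N = (\<integral>z. h z - min (h z) (sqrt (real N)) \<partial>(M \<Otimes>\<^sub>M M))" for N :: nat
  have sqrt_N: "filterlim (\<lambda>N. sqrt (real N)) at_top sequentially"
    by (rule filterlim_compose[OF sqrt_at_top filterlim_real_sequentially])
  have "\<beta> \<longlonglongrightarrow> (\<integral>z. 0 \<partial>(M \<Otimes>\<^sub>M M))"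
    unfolding \<beta>_def
  proof (rule integral_dominated_convergence[where w=h])
    show "AE z in M \<Otimes>\<^sub>M M. (\<lambda>N. h z - min (h z) (sqrt (real N))) \<longlonglongrightarrow> 0" for z
    proof (rule AE_I2, rule tendsto_eventually)
      fix z
      have "\<forall>\<^sub>F N in sequentially. h z \<le> sqrt (real N)"
        using sqrt_N by (simp add: filterlim_at_top)
      then show "\<forall>\<^sub>F N in sequentially. h z - min (h z) (sqrt (real N)) = 0"
        by (rule eventually_mono) simp
    qed
  qed (use h_int h_nonneg in auto)
  moreover have "(\<lambda>N. 8 * \<mu> / sqrt (real N)) \<longlonglongrightarrow> 0"
    by (intro tendsto_divide_0[OF tendsto_const] filterlim_at_top_imp_at_infinity sqrt_N)
  ultimately have lower: "(\<lambda>N. 1 - (\<beta> N + 8 * \<mu> / sqrt (real N))) \<longlonglongrightarrow> 1"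
    using tendsto_diff[OF tendsto_const tendsto_add] by fastforce
  show ?thesis
  proof (rule tendsto_sandwich[OF _ _ lower tendsto_const])
    show "\<forall>\<^sub>F N in sequentially. 1 - (\<beta> N + 8 * \<mu> / sqrt (real N))
        \<le> measure (PiM {..<N} (\<lambda>_. M)) {y \<in> space (PiM {..<N} (\<lambda>_. M)).
           1 / (real N)\<^sup>2 * pair_sum h N y \<le> (\<integral>z. h z \<partial>(M \<Otimes>\<^sub>M M)) + 2}"
    proof (rule eventually_sequentiallyI[of 1])
      fix N :: nat assume N: "1 \<le> N"
      have "8 * sqrt (real N) * \<mu> / real N = 8 * \<mu> / sqrt (real N)"
        using N by (simp add: field_simps flip: real_sqrt_mult)
      then show "1 - (\<beta> N + 8 * \<mu> / sqrt (real N))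
        \<le> measure (PiM {..<N} (\<lambda>_. M)) {y \<in> space (PiM {..<N} (\<lambda>_. M)).
           1 / (real N)\<^sup>2 * pair_sum h N y \<le> (\<integral>z. h z \<partial>(M \<Otimes>\<^sub>M M)) + 2}"
        using prob_pair_sum_le_ge[OF h h_nonneg h_int N, of "sqrt (real N)"]
        by (simp add: \<beta>_def \<mu>_def)
    qed
    show "\<forall>\<^sub>F N in sequentially. measure (PiM {..<N} (\<lambda>_. M)) {y \<in> space (PiM {..<N} (\<lambda>_. M)).
           1 / (real N)\<^sup>2 * pair_sum h N y \<le> (\<integral>z. h z \<partial>(M \<Otimes>\<^sub>M M)) + 2} \<le> 1"
      by (intro always_eventually allI prob_space.prob_le_1 prob_space_PiM_power)
  qed
qed

end

section \<open>Minimal distance of the sample\<close>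

lemma prob_no_close_pair_ge:
  fixes M :: "'a::metric_space measure"
  assumes M: "prob_space M"
    and dist_meas: "(\<lambda>z. dist (fst z) (snd z)) \<in> borel_measurable (M \<Otimes>\<^sub>M M)"
  shows "1 - (real N)\<^sup>2 * measure (M \<Otimes>\<^sub>M M) {z \<in> space (M \<Otimes>\<^sub>M M). dist (fst z) (snd z) < r}
    \<le> measure (PiM {..<N} (\<lambda>_. M))
         {y \<in> space (PiM {..<N} (\<lambda>_. M)). \<forall>i<N. \<forall>j<N. i \<noteq> j \<longrightarrow> r \<le> dist (y i) (y j)}"
proof -
  interpret P: prob_space "PiM {..<N} (\<lambda>_. M)" by (rule prob_space_PiM_power[OF M])
  let ?P = "PiM {..<N} (\<lambda>_. M)"
  define B where "B = {z \<in> space (M \<Otimes>\<^sub>M M). dist (fst z) (snd z) < r}"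
  define A where "A p = {y \<in> space ?P. (y (fst p), y (snd p)) \<in> B}" for p :: "nat \<times> nat"
  have B: "B \<in> sets (M \<Otimes>\<^sub>M M)"
    unfolding B_def using dist_meas by measurable
  have p: "fst p \<in> {..<N}" "snd p \<in> {..<N}" "fst p \<noteq> snd p" if "p \<in> offdiag N" for p
    using that by (auto simp: mem_offdiag)
  have A: "A p \<in> sets ?P" if "p \<in> offdiag N" for p
  proof -
    have "(\<lambda>y. (y (fst p), y (snd p))) -` B \<inter> space ?P \<in> sets ?P"
      by (rule measurable_sets[OF measurable_component_pair B]) (use p[OF that] in auto)
    then show ?thesis
      by (simp add: A_def vimage_def Int_def conj_commute)
  qed
  have "measure ?P (\<Union>p\<in>offdiag N. A p) \<le> (\<Sum>p\<in>offdiag N. measure ?P (A p))"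
    by (rule measure_UNION_le[OF finite_offdiag A])
  also have "\<dots> = real (card (offdiag N)) * measure (M \<Otimes>\<^sub>M M) B"
    unfolding A_def by (simp add: measure_component_pair[OF M p B])
  also have "\<dots> \<le> (real N)\<^sup>2 * measure (M \<Otimes>\<^sub>M M) B"
    by (intro mult_right_mono card_offdiag_le) simp
  finally have "1 - (real N)\<^sup>2 * measure (M \<Otimes>\<^sub>M M) B \<le> 1 - measure ?P (\<Union>p\<in>offdiag N. A p)"
    by simp
  also have "\<dots> = measure ?P (space ?P - (\<Union>p\<in>offdiag N. A p))"
    using A by (intro P.prob_compl[symmetric]) auto
  also have "space ?P - (\<Union>p\<in>offdiag N. A p)
      = {y \<in> space ?P. \<forall>i<N. \<forall>j<N. i \<noteq> j \<longrightarrow> r \<le> dist (y i) (y j)}"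
  proof -
    have "(y i, y j) \<in> space (M \<Otimes>\<^sub>M M)" if "y \<in> space ?P" "i < N" "j < N" for y i j
      using measurable_space[OF measurable_component_pair that(1)] that(2,3) by simp
    then show ?thesis
      by (auto simp: A_def B_def offdiag_def) (metis not_less)
  qed
  finally show ?thesis
    unfolding B_def .
qed

lemma power2_times_divide_powr_power:
  assumes "N > 0"
  shows "N\<^sup>2 * (C / N powr s) ^ d = C ^ d * N powr (2 - real d * s)"
proof -
  have "(N powr s) ^ d = N powr (real d * s)"
    using assms by (simp add: powr_power)
  then show ?thesis
    using assms by (simp add: power_divide powr_diff powr_numeral)
qed

lemma tendsto_prob_no_close_pair:
  fixes M :: "'a::metric_space measure"
  assumes M: "prob_space M"
    and dist_meas: "(\<lambda>z. dist (fst z) (snd z)) \<in> borel_measurable (M \<Otimes>\<^sub>M M)"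
    and close_le: "\<And>r. r > 0 \<Longrightarrow>
      measure (M \<Otimes>\<^sub>M M) {z \<in> space (M \<Otimes>\<^sub>M M). dist (fst z) (snd z) < r} \<le> c * r ^ d"
    and \<nu>: "2 < real d * (1 - \<nu>)" and C: "C > 0"
  shows "(\<lambda>N. measure (PiM {..<N} (\<lambda>_. M)) {y \<in> space (PiM {..<N} (\<lambda>_. M)).
           \<forall>i<N. \<forall>j<N. i \<noteq> j \<longrightarrow> dist (y i) (y j) \<ge> C / real N powr (1 - \<nu>)}) \<longlonglongrightarrow> 1"
proof (rule tendsto_sandwich)
  have "(\<lambda>N. real N powr (2 - real d * (1 - \<nu>))) \<longlonglongrightarrow> 0"
    by (rule tendsto_neg_powr[OF _ filterlim_real_sequentially]) (use \<nu> in simp)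
  then show "(\<lambda>N. 1 - c * C ^ d * real N powr (2 - real d * (1 - \<nu>))) \<longlonglongrightarrow> 1"
    using tendsto_diff[OF tendsto_const tendsto_mult[OF tendsto_const]] by fastforce
  show "\<forall>\<^sub>F N in sequentially. 1 - c * C ^ d * real N powr (2 - real d * (1 - \<nu>))
      \<le> measure (PiM {..<N} (\<lambda>_. M)) {y \<in> space (PiM {..<N} (\<lambda>_. M)).
           \<forall>i<N. \<forall>j<N. i \<noteq> j \<longrightarrow> dist (y i) (y j) \<ge> C / real N powr (1 - \<nu>)}"
  proof (rule eventually_sequentiallyI[of 1])
    fix N :: nat assume "1 \<le> N"
    then have "(real N)\<^sup>2 * measure (M \<Otimes>\<^sub>M M) {z \<in> space (M \<Otimes>\<^sub>M M). dist (fst z) (snd z) < C / real N powr (1 - \<nu>)}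
        \<le> c * C ^ d * real N powr (2 - real d * (1 - \<nu>))"
      using mult_left_mono[OF close_le, of "C / real N powr (1 - \<nu>)" "(real N)\<^sup>2"] C
      by (simp add: power2_times_divide_powr_power mult_ac)
    then show "1 - c * C ^ d * real N powr (2 - real d * (1 - \<nu>))
      \<le> measure (PiM {..<N} (\<lambda>_. M)) {y \<in> space (PiM {..<N} (\<lambda>_. M)).
           \<forall>i<N. \<forall>j<N. i \<noteq> j \<longrightarrow> dist (y i) (y j) \<ge> C / real N powr (1 - \<nu>)}"
      using prob_no_close_pair_ge[OF M dist_meas, of N "C / real N powr (1 - \<nu>)"] by linarith
  qed
  show "\<forall>\<^sub>F N in sequentially. measure (PiM {..<N} (\<lambda>_. M)) {y \<in> space (PiM {..<N} (\<lambda>_. M)).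
           \<forall>i<N. \<forall>j<N. i \<noteq> j \<longrightarrow> dist (y i) (y j) \<ge> C / real N powr (1 - \<nu>)} \<le> 1"
    by (intro always_eventually allI prob_space.prob_le_1 prob_space_PiM_power[OF M])
qed simp

section \<open>Radial kernels on Euclidean space\<close>

lemma nn_integral_indicator_norm_less:
  assumes "r \<ge> 0"
  shows "(\<integral>\<^sup>+z. indicator {..<r} (norm z) \<partial>(lborel :: 'a::euclidean_space measure))
    = ennreal (unit_ball_vol DIM('a) * r ^ DIM('a))"
proof -
  have "(\<lambda>z::'a. indicator {..<r} (norm z) :: ennreal) = indicator (ball 0 r)"
    by (auto simp: indicator_def fun_eq_iff)
  then show ?thesis
    using emeasure_ball[OF assms, of "0::'a"] by simp
qed

lemma exists_dyadic_scale:
  assumes "0 < t" "t < 1"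
  obtains m where "t \<le> (1/2::real) ^ m" "(1/2) ^ Suc m < t"
proof -
  obtain n where "(1/2::real) ^ n < t"
    using real_arch_pow_inv[of t "1/2"] assms by auto
  then obtain m where "\<not> (1/2::real) ^ m < t" "(1/2) ^ Suc m < t"
    using exists_least_lemma[of "\<lambda>n. (1/2::real) ^ n < t"] assms by auto
  then show ?thesis
    using that by (simp add: not_less)
qed

lemma inverse_powr_le_dyadic:
  assumes "(1/2::real) ^ Suc m < t" "0 \<le> a"
  shows "1 / t powr a \<le> (2 powr a) ^ Suc m"
proof -
  have t: "0 < t"
    using assms(1) zero_less_power[of "1/2::real" "Suc m"] by linarith
  have "1 / t < 2 ^ Suc m"
    using assms(1) t by (simp add: power_one_over divide_less_eq mult.commute)
  then have "(1 / t) powr a \<le> (2 ^ Suc m) powr a"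
    using t assms(2) by (intro powr_mono2) auto
  also have "(2 ^ Suc m :: real) powr a = 2 powr (real (Suc m) * a)"
    by (simp only: powr_powr flip: powr_realpow[of 2, OF zero_less_numeral])
  also have "\<dots> = (2 powr a) ^ Suc m"
    by (subst powr_power) simp_all
  finally show ?thesis
    by (simp add: powr_divide)
qed

lemma nn_integral_inverse_norm_powr_finite:
  fixes a :: real
  assumes a: "0 \<le> a" "a < DIM('a)"
  shows "(\<integral>\<^sup>+z. ennreal (indicator {..<1} (norm z) * (1 / norm z powr a)) \<partial>(lborel :: 'a::euclidean_space measure))
    < \<infinity>"
proof -
  define V where "V = unit_ball_vol DIM('a)"
  define q where "q = 2 powr a / 2 ^ DIM('a)"
  have "2 powr a < 2 powr DIM('a)"
    using a by (intro powr_less_mono) auto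
  then have q: "0 \<le> q" "q < 1"
    unfolding q_def by (simp_all add: powr_realpow)
  define f where "f n z = ennreal ((2 powr a) ^ Suc n) * indicator (cball (0::'a) ((1/2) ^ n)) z" for n z
  have f_meas: "f n \<in> borel_measurable lborel" for n
    unfolding f_def by (intro borel_measurable_times_ennreal borel_measurable_const borel_measurable_indicator) simp
  \<comment> \<open>on the dyadic shell \<open>2^-(m+1) < |z| \<le> 2^-m\<close> the integrand is at most \<open>(2^a)^(m+1)\<close>\<close>
  have dyadic_bound: "ennreal (indicator {..<1} (norm z) * (1 / norm z powr a)) \<le> (\<Sum>n. f n z)" for z
  proof (cases "z \<noteq> 0 \<and> norm z < 1")
    case True
    then obtain m where m: "norm z \<le> (1/2) ^ m" "(1/2) ^ Suc m < norm z"
      using exists_dyadic_scale[of "norm z"] by auto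
    have "ennreal (indicator {..<1} (norm z) * (1 / norm z powr a)) = ennreal (1 / norm z powr a)"
      using True by simp
    also have "\<dots> \<le> f m z"
      using m(1) inverse_powr_le_dyadic[OF m(2) a(1)] by (simp add: f_def ennreal_leI)
    also have "\<dots> \<le> (\<Sum>n. f n z)"
      by (metis ennreal_suminf_lessD not_le order_less_irrefl)
    finally show ?thesis .
  qed auto
  have "(\<integral>\<^sup>+z. ennreal (indicator {..<1} (norm z) * (1 / norm z powr a)) \<partial>(lborel :: 'a measure))
      \<le> (\<integral>\<^sup>+z. (\<Sum>n. f n z) \<partial>lborel)"
    by (rule nn_integral_mono) (rule dyadic_bound)
  also have "\<dots> = (\<Sum>n. \<integral>\<^sup>+z. f n z \<partial>lborel)"
    by (rule nn_integral_suminf[OF f_meas])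
  also have "\<dots> = (\<Sum>n. ennreal (2 powr a * V * q ^ n))"
  proof (rule suminf_cong)
    fix n
    have shrink: "((1/2::real) ^ n) ^ DIM('a) = (1 / 2 ^ DIM('a)) ^ n"
      by (simp add: power_one_over flip: power_mult[of 2] mult.commute)
    have "(\<integral>\<^sup>+z. f n z \<partial>lborel) = ennreal ((2 powr a) ^ Suc n) * emeasure lborel (cball (0::'a) ((1/2) ^ n))"
      unfolding f_def by (rule nn_integral_cmult_indicator) simp
    also have "\<dots> = ennreal ((2 powr a) ^ Suc n * (V * ((1/2) ^ n) ^ DIM('a)))"
      by (simp add: emeasure_cball V_def ennreal_mult)
    also have "(2 powr a) ^ Suc n * (V * ((1/2) ^ n) ^ DIM('a)) = 2 powr a * V * q ^ n"
      unfolding shrink by (simp add: q_def power_divide)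
    finally show "(\<integral>\<^sup>+z. f n z \<partial>lborel) = ennreal (2 powr a * V * q ^ n)" .
  qed
  also have "\<dots> = ennreal (\<Sum>n. 2 powr a * V * q ^ n)"
    using q by (intro suminf_ennreal2) (auto simp: V_def intro!: summable_mult summable_geometric)
  finally show ?thesis
    by (rule order.strict_trans1) simp
qed

lemma nn_integral_dist_eq_norm:
  fixes k :: "real \<Rightarrow> ennreal" and x :: "'a::euclidean_space"
  assumes [measurable]: "k \<in> borel_measurable borel"
  shows "(\<integral>\<^sup>+y. k (dist x y) \<partial>lborel) = (\<integral>\<^sup>+z. k (norm z) \<partial>(lborel :: 'a measure))"
proof -
  have "(\<integral>\<^sup>+y. k (dist x y) \<partial>lborel) = (\<integral>\<^sup>+y. k (dist x y) \<partial>distr lborel borel ((+) x))"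
    by (simp add: lborel_distr_plus)
  also have "\<dots> = (\<integral>\<^sup>+z. k (dist x (x + z)) \<partial>lborel)"
    by (rule nn_integral_distr) auto
  finally show ?thesis
    by (simp add: dist_norm)
qed

lemma
  fixes g :: "'a::euclidean_space \<Rightarrow> ennreal" and k :: "real \<Rightarrow> ennreal"
  assumes [measurable]: "g \<in> borel_measurable borel" "k \<in> borel_measurable borel"
  shows nn_integral_radial_convolution_fst:
      "(\<integral>\<^sup>+x. \<integral>\<^sup>+y. g x * k (dist x y) \<partial>lborel \<partial>lborel) = (\<integral>\<^sup>+x. g x \<partial>lborel) * (\<integral>\<^sup>+z. k (norm z) \<partial>(lborel :: 'a measure))"
    and nn_integral_radial_convolution_snd:
      "(\<integral>\<^sup>+x. \<integral>\<^sup>+y. g y * k (dist x y) \<partial>lborel \<partial>lborel) = (\<integral>\<^sup>+x. g x \<partial>lborel) * (\<integral>\<^sup>+z. k (norm z) \<partial>(lborel :: 'a measure))"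
proof -
  show fst: "(\<integral>\<^sup>+x. \<integral>\<^sup>+y. g x * k (dist x y) \<partial>lborel \<partial>lborel) = (\<integral>\<^sup>+x. g x \<partial>lborel) * (\<integral>\<^sup>+z. k (norm z) \<partial>(lborel :: 'a measure))"
    by (simp add: nn_integral_cmult nn_integral_dist_eq_norm nn_integral_multc)
  have "(\<lambda>(x, y). g y * k (dist x y)) \<in> borel_measurable (lborel \<Otimes>\<^sub>M lborel)"
    unfolding case_prod_beta by measurable
  from lborel_pair.Fubini'[OF this]
  show "(\<integral>\<^sup>+x. \<integral>\<^sup>+y. g y * k (dist x y) \<partial>lborel \<partial>lborel) = (\<integral>\<^sup>+x. g x \<partial>lborel) * (\<integral>\<^sup>+z. k (norm z) \<partial>(lborel :: 'a measure))"
    using fst by (simp add: dist_commute)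
qed

lemma measurable_lborel_pair_iff:
  "measurable (lborel \<Otimes>\<^sub>M lborel :: ('a::euclidean_space \<times> 'a) measure) N = measurable borel N"
  by (rule measurable_cong_sets) (simp_all only: lborel_prod sets_lborel)

section \<open>Pairs of points with a square-integrable density\<close>

context
  fixes W :: "'a::euclidean_space \<Rightarrow> real"
  assumes W_meas: "W \<in> borel_measurable lborel" and W_nonneg: "\<And>x. W x \<ge> 0"
    and W_L1: "integrable lborel W" and W_prob: "integral\<^sup>L lborel W = 1"
begin

abbreviation law :: "'a measure" where
  "law \<equiv> density lborel (\<lambda>x. ennreal (W x))"

lemma borel_measurable_W [measurable]: "W \<in> borel_measurable borel"
  using W_meas by simp

lemma nn_integral_W: "(\<integral>\<^sup>+x. ennreal (W x) \<partial>lborel) = 1"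
  using nn_integral_eq_integral[OF W_L1] W_nonneg W_prob by simp

lemma prob_space_law: "prob_space law"
  by (rule prob_spaceI) (simp add: emeasure_density nn_integral_W)

lemma measurable_law_pair_iff: "measurable (law \<Otimes>\<^sub>M law) N = measurable borel N"
  by (rule measurable_cong_sets) (simp_all only: sets_pair_measure_cong[OF sets_density sets_density] lborel_prod sets_lborel)

lemma measurable_law_pair_of_lborel:
  "f \<in> borel_measurable (lborel \<Otimes>\<^sub>M lborel) \<Longrightarrow> f \<in> borel_measurable (law \<Otimes>\<^sub>M law)"
  by (simp add: measurable_law_pair_iff measurable_lborel_pair_iff)

lemma nn_integral_law_pair:
  assumes F [measurable]: "F \<in> borel_measurable (lborel \<Otimes>\<^sub>M lborel)"
  shows "(\<integral>\<^sup>+z. F z \<partial>(law \<Otimes>\<^sub>M law)) = (\<integral>\<^sup>+x. \<integral>\<^sup>+y. ennreal (W x) * (ennreal (W y) * F (x, y)) \<partial>lborel \<partial>lborel)"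
proof -
  interpret law: sigma_finite_measure law
    by (rule prob_space_imp_sigma_finite[OF prob_space_law])
  have "(\<integral>\<^sup>+z. F z \<partial>(law \<Otimes>\<^sub>M law)) = (\<integral>\<^sup>+x. \<integral>\<^sup>+y. F (x, y) \<partial>law \<partial>law)"
    by (rule law.nn_integral_fst[symmetric]) (use F in \<open>simp add: measurable_law_pair_iff measurable_lborel_pair_iff\<close>)
  also have "\<dots> = (\<integral>\<^sup>+x. ennreal (W x) * (\<integral>\<^sup>+y. ennreal (W y) * F (x, y) \<partial>lborel) \<partial>lborel)"
    by (simp add: nn_integral_density lborel.borel_measurable_nn_integral_fst)
  finally show ?thesis
    by (simp add: nn_integral_cmult)
qed

lemma nn_integral_radial_law_pair_le:
  fixes k :: "real \<Rightarrow> ennreal"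
  assumes k [measurable]: "k \<in> borel_measurable borel"
  shows "(\<integral>\<^sup>+z. k (dist (fst z) (snd z)) \<partial>(law \<Otimes>\<^sub>M law))
    \<le> 2 * (\<integral>\<^sup>+x. ennreal ((W x)\<^sup>2) \<partial>lborel) * (\<integral>\<^sup>+z. k (norm z) \<partial>(lborel :: 'a measure))"
proof -
  let ?Q = "\<integral>\<^sup>+x. ennreal ((W x)\<^sup>2) \<partial>lborel" and ?K = "\<integral>\<^sup>+z. k (norm z) \<partial>(lborel :: 'a measure)"
  have am_gm: "ennreal (W x) * (ennreal (W y) * k (dist x y))
      \<le> ennreal ((W x)\<^sup>2) * k (dist x y) + ennreal ((W y)\<^sup>2) * k (dist x y)" for x y
  proof -
    have "W x * W y \<le> (W x)\<^sup>2 + (W y)\<^sup>2"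
      using mult_nonneg_nonneg[OF W_nonneg W_nonneg, of x y] sum_squares_bound[of "W x" "W y"] by simp
    then have "ennreal (W x * W y) * k (dist x y) \<le> ennreal ((W x)\<^sup>2 + (W y)\<^sup>2) * k (dist x y)"
      by (intro mult_right_mono ennreal_leI) simp_all
    then show ?thesis
      using W_nonneg by (simp add: ennreal_mult ennreal_plus distrib_right mult.assoc)
  qed
  have "(\<integral>\<^sup>+z. k (dist (fst z) (snd z)) \<partial>(law \<Otimes>\<^sub>M law))
      = (\<integral>\<^sup>+x. \<integral>\<^sup>+y. ennreal (W x) * (ennreal (W y) * k (dist x y)) \<partial>lborel \<partial>lborel)"
    using nn_integral_law_pair[of "\<lambda>z. k (dist (fst z) (snd z))"] by simp
  also have "\<dots> \<le> (\<integral>\<^sup>+x. (\<integral>\<^sup>+y. ennreal ((W x)\<^sup>2) * k (dist x y) \<partial>lborel)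
                 + (\<integral>\<^sup>+y. ennreal ((W y)\<^sup>2) * k (dist x y) \<partial>lborel) \<partial>lborel)"
  proof (rule nn_integral_mono)
    fix x :: 'a
    have "(\<integral>\<^sup>+y. ennreal (W x) * (ennreal (W y) * k (dist x y)) \<partial>lborel)
        \<le> (\<integral>\<^sup>+y. ennreal ((W x)\<^sup>2) * k (dist x y) + ennreal ((W y)\<^sup>2) * k (dist x y) \<partial>lborel)"
      by (rule nn_integral_mono) (rule am_gm)
    then show "(\<integral>\<^sup>+y. ennreal (W x) * (ennreal (W y) * k (dist x y)) \<partial>lborel)
        \<le> (\<integral>\<^sup>+y. ennreal ((W x)\<^sup>2) * k (dist x y) \<partial>lborel) + (\<integral>\<^sup>+y. ennreal ((W y)\<^sup>2) * k (dist x y) \<partial>lborel)"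
      by (simp add: nn_integral_add)
  qed
  also have "\<dots> = (\<integral>\<^sup>+x. \<integral>\<^sup>+y. ennreal ((W x)\<^sup>2) * k (dist x y) \<partial>lborel \<partial>lborel)
      + (\<integral>\<^sup>+x. \<integral>\<^sup>+y. ennreal ((W y)\<^sup>2) * k (dist x y) \<partial>lborel \<partial>lborel)"
  proof (rule nn_integral_add)
    have "(\<lambda>z. ennreal ((W (fst z))\<^sup>2) * k (dist (fst z) (snd z))) \<in> borel_measurable (lborel \<Otimes>\<^sub>M lborel)"
      by measurable
    from lborel.borel_measurable_nn_integral_fst[OF this]
    show "(\<lambda>x. \<integral>\<^sup>+y. ennreal ((W x)\<^sup>2) * k (dist x y) \<partial>lborel) \<in> borel_measurable lborel"
      by simp
    have "(\<lambda>z. ennreal ((W (snd z))\<^sup>2) * k (dist (fst z) (snd z))) \<in> borel_measurable (lborel \<Otimes>\<^sub>M lborel)"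
      by measurable
    from lborel.borel_measurable_nn_integral_fst[OF this]
    show "(\<lambda>x. \<integral>\<^sup>+y. ennreal ((W y)\<^sup>2) * k (dist x y) \<partial>lborel) \<in> borel_measurable lborel"
      by simp
  qed
  also have "\<dots> = ?Q * ?K + ?Q * ?K"
  proof -
    have "(\<lambda>x. ennreal ((W x)\<^sup>2)) \<in> borel_measurable borel"
      by measurable
    from nn_integral_radial_convolution_fst[OF this k] nn_integral_radial_convolution_snd[OF this k]
    show ?thesis
      by simp
  qed
  finally show ?thesis
    by (simp add: mult_2 distrib_right)
qed

lemma nn_integral_square_finite:
  assumes p: "p \<ge> 2" and W_Lp: "integrable lborel (\<lambda>x. \<bar>W x\<bar> powr p)"
  shows "(\<integral>\<^sup>+x. ennreal ((W x)\<^sup>2) \<partial>lborel) < \<infinity>"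
proof -
  have "(W x)\<^sup>2 \<le> W x + \<bar>W x\<bar> powr p" for x
  proof (cases "W x \<le> 1")
    case True
    then have "(W x)\<^sup>2 \<le> W x"
      using W_nonneg[of x] by (simp add: power2_eq_square mult_left_le)
    then show ?thesis
      using powr_ge_zero[of "\<bar>W x\<bar>" p] by linarith
  next
    case False
    then have "W x powr 2 \<le> W x powr p"
      using p by (intro powr_mono) auto
    then show ?thesis
      using False W_nonneg[of x] by simp
  qed
  then have "(\<integral>\<^sup>+x. ennreal ((W x)\<^sup>2) \<partial>lborel) \<le> (\<integral>\<^sup>+x. ennreal (W x) + ennreal (\<bar>W x\<bar> powr p) \<partial>lborel)"
    using W_nonneg by (intro nn_integral_mono) (simp add: ennreal_plus[symmetric] del: ennreal_plus)
  also have "\<dots> = 1 + ennreal (\<integral>x. \<bar>W x\<bar> powr p \<partial>lborel)"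
    by (simp add: nn_integral_add nn_integral_W nn_integral_eq_integral[OF W_Lp])
  finally show ?thesis
    by (rule order.strict_trans1) simp
qed

lemma prob_close_pair_le:
  assumes W_L2: "(\<integral>\<^sup>+x. ennreal ((W x)\<^sup>2) \<partial>lborel) < \<infinity>"
  shows "\<exists>c. \<forall>r>0. measure (law \<Otimes>\<^sub>M law) {z \<in> space (law \<Otimes>\<^sub>M law). dist (fst z) (snd z) < r}
    \<le> c * r ^ DIM('a)"
proof -
  obtain q where q: "(\<integral>\<^sup>+x. ennreal ((W x)\<^sup>2) \<partial>lborel) = ennreal q" "0 \<le> q"
    using W_L2 by (auto simp: less_top_ennreal)
  define V where "V = unit_ball_vol DIM('a)"
  have dist_meas: "(\<lambda>z. dist (fst z) (snd z)) \<in> borel_measurable (law \<Otimes>\<^sub>M law)"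
    by (rule measurable_law_pair_of_lborel) measurable
  have "measure (law \<Otimes>\<^sub>M law) {z \<in> space (law \<Otimes>\<^sub>M law). dist (fst z) (snd z) < r} \<le> 2 * q * V * r ^ DIM('a)"
    if r: "r > 0" for r
  proof -
    let ?B = "{z \<in> space (law \<Otimes>\<^sub>M law). dist (fst z) (snd z) < r}"
    have "?B \<in> sets (law \<Otimes>\<^sub>M law)"
      using dist_meas by measurable
    then have "emeasure (law \<Otimes>\<^sub>M law) ?B = (\<integral>\<^sup>+z. indicator ?B z \<partial>(law \<Otimes>\<^sub>M law))"
      by simp
    also have "\<dots> = (\<integral>\<^sup>+z. indicator {..<r} (dist (fst z) (snd z)) \<partial>(law \<Otimes>\<^sub>M law))"
      by (rule nn_integral_cong) (simp add: indicator_def)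
    also have "\<dots> \<le> 2 * (\<integral>\<^sup>+x. ennreal ((W x)\<^sup>2) \<partial>lborel) * (\<integral>\<^sup>+z. indicator {..<r} (norm z) \<partial>(lborel :: 'a measure))"
      by (rule nn_integral_radial_law_pair_le) measurable
    also have "\<dots> = ennreal (2 * q * V * r ^ DIM('a))"
      using q r V_def by (simp add: nn_integral_indicator_norm_less ennreal_mult mult.assoc)
    finally show ?thesis
      using q(2) r by (simp add: measure_def enn2real_leI V_def)
  qed
  then show ?thesis
    by blast
qed

lemma integrable_inverse_dist_powr:
  fixes a :: real
  assumes W_L2: "(\<integral>\<^sup>+x. ennreal ((W x)\<^sup>2) \<partial>lborel) < \<infinity>" and a: "0 \<le> a" "a < DIM('a)"
  shows "integrable (law \<Otimes>\<^sub>M law) (\<lambda>z. 1 / dist (fst z) (snd z) powr a)"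
proof (rule integrableI_bounded)
  let ?h = "\<lambda>z. 1 / dist (fst z) (snd z) powr a"
  define k where "k t = ennreal (indicator {..<1} t * (1 / t powr a))" for t :: real
  have k_meas [measurable]: "k \<in> borel_measurable borel"
    unfolding k_def by measurable
  show "?h \<in> borel_measurable (law \<Otimes>\<^sub>M law)"
    by (rule measurable_law_pair_of_lborel) measurable
  have "ennreal (norm (?h z)) \<le> k (dist (fst z) (snd z)) + 1" for z
  proof (cases "dist (fst z) (snd z) < 1")
    case False
    then have "1 \<le> dist (fst z) (snd z) powr a"
      using a by (intro ge_one_powr_ge_zero) auto
    then show ?thesis
      using False by (simp add: k_def divide_le_eq_1)
  qed (simp add: k_def ennreal_plus[symmetric] del: ennreal_plus)
  then have "(\<integral>\<^sup>+z. norm (?h z) \<partial>(law \<Otimes>\<^sub>M law)) \<le> (\<integral>\<^sup>+z. k (dist (fst z) (snd z)) + 1 \<partial>(law \<Otimes>\<^sub>M law))"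
    by (intro nn_integral_mono)
  also have "\<dots> = (\<integral>\<^sup>+z. k (dist (fst z) (snd z)) \<partial>(law \<Otimes>\<^sub>M law)) + 1"
    using prob_space.emeasure_space_1[OF prob_space_pair[OF prob_space_law prob_space_law]]
    by (subst nn_integral_add) (auto intro: measurable_law_pair_of_lborel)
  also have "\<dots> \<le> 2 * (\<integral>\<^sup>+x. ennreal ((W x)\<^sup>2) \<partial>lborel) * (\<integral>\<^sup>+z. k (norm z) \<partial>(lborel :: 'a measure)) + 1"
    by (intro add_right_mono nn_integral_radial_law_pair_le k_meas)
  also have "\<dots> < \<infinity>"
    using W_L2 nn_integral_inverse_norm_powr_finite[OF a] by (simp add: k_def ennreal_mult_less_top)
  finally show "(\<integral>\<^sup>+z. norm (?h z) \<partial>(law \<Otimes>\<^sub>M law)) < \<infinity>" .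
qed

lemma tendsto_prob_min_dist:
  assumes W_L2: "(\<integral>\<^sup>+x. ennreal ((W x)\<^sup>2) \<partial>lborel) < \<infinity>"
    and \<nu>: "2 < real DIM('a) * (1 - \<nu>)" and C: "C > 0"
  shows "(\<lambda>N. measure (PiM {..<N} (\<lambda>_. law)) {y \<in> space (PiM {..<N} (\<lambda>_. law)).
           \<forall>i<N. \<forall>j<N. i \<noteq> j \<longrightarrow> dist (y i) (y j) \<ge> C / real N powr (1 - \<nu>)}) \<longlonglongrightarrow> 1"
proof -
  have "(\<lambda>z. dist (fst z) (snd z)) \<in> borel_measurable (law \<Otimes>\<^sub>M law)"
    by (rule measurable_law_pair_of_lborel) measurable
  moreover obtain c where "\<forall>r>0. measure (law \<Otimes>\<^sub>M law) {z \<in> space (law \<Otimes>\<^sub>M law). dist (fst z) (snd z) < r}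
      \<le> c * r ^ DIM('a)"
    using prob_close_pair_le[OF W_L2] by blast
  ultimately show ?thesis
    by (intro tendsto_prob_no_close_pair[OF prob_space_law _ _ \<nu> C]) auto
qed

lemma tendsto_prob_energy_le:
  fixes a :: real
  assumes W_L2: "(\<integral>\<^sup>+x. ennreal ((W x)\<^sup>2) \<partial>lborel) < \<infinity>" and a: "0 \<le> a" "a < DIM('a)"
  shows "\<exists>C. (\<lambda>N. measure (PiM {..<N} (\<lambda>_. law)) {y \<in> space (PiM {..<N} (\<lambda>_. law)).
           1 / (real N)\<^sup>2 * (\<Sum>i<N. \<Sum>j\<in>{..<N} - {i}. 1 / dist (y i) (y j) powr a) \<le> C}) \<longlonglongrightarrow> 1"
proof -
  let ?h = "\<lambda>z. 1 / dist (fst z) (snd z) powr a"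
  have "?h \<in> borel_measurable (law \<Otimes>\<^sub>M law)"
    by (rule measurable_law_pair_of_lborel) measurable
  from tendsto_prob_pair_sum_le[OF prob_space_law this _ integrable_inverse_dist_powr[OF W_L2 a]]
  show ?thesis
    unfolding pair_sum_eq_double_sum by (intro exI) simp
qed

end

theorem lemma2p1:
  fixes W :: "real^3 \<Rightarrow> real" and p :: real
  assumes W_meas: "W \<in> borel_measurable lborel"
    and W_nonneg: "\<And>x. W x \<ge> 0"
    and W_L1: "integrable lborel W"
    and W_prob: "integral\<^sup>L lborel W = 1"
    and p_gt: "p > 3"
    and W_Lp: "integrable lborel (\<lambda>x. \<bar>W x\<bar> powr p)"
  shows "(\<forall>\<nu> C. 0 < \<nu> \<and> \<nu> < nu_star p \<and> C > 0 \<longrightarrow>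
           (\<lambda>N. measure (iid_law W N)
              {y \<in> space (iid_law W N). \<forall>i<N. \<forall>j<N. i \<noteq> j \<longrightarrow>
                  dist (y i) (y j) \<ge> C / real N powr (1 - \<nu>)}) \<longlonglongrightarrow> 1)
       \<and> (\<forall>\<xi>. 0 < \<xi> \<and> \<xi> \<le> 1 \<longrightarrow> (\<exists>C\<^sub>\<xi>.
           (\<lambda>N. measure (iid_law W N)
              {y \<in> space (iid_law W N).
                 (1 / (real N)\<^sup>2) * (\<Sum>i<N. \<Sum>j\<in>{..<N} - {i}. 1 / dist (y i) (y j) powr (3 - \<xi>))
                   \<le> C\<^sub>\<xi>}) \<longlonglongrightarrow> 1))"
proof -
  note W = W_meas W_nonneg W_L1 W_prob
  have W_L2: "(\<integral>\<^sup>+x. ennreal ((W x)\<^sup>2) \<partial>lborel) < \<infinity>"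
    by (rule nn_integral_square_finite[OF W _ W_Lp]) (use p_gt in simp)
  have "nu_star p < 1/3"
    using p_gt by (simp add: nu_star_def field_simps)
  then have \<nu>_bound: "2 < real DIM(real^3) * (1 - \<nu>)" if "\<nu> < nu_star p" for \<nu>
    using that by simp
  show ?thesis
    unfolding iid_law_def
    apply (intro conjI allI impI)
    subgoal by (rule tendsto_prob_min_dist[OF W W_L2 \<nu>_bound]) auto
    subgoal by (rule tendsto_prob_energy_le[OF W W_L2]) auto
    done
qed

end
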